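(* Let $\mathcal S=((x_n,r_n))_{n\ge1}$ be a system satisfying $\mathcal C_1$ with sequence $(N_j)$ and associated function $\psi$, let $((y_n,\rho_n))_{n\ge1}$ be its irreducible subsystem, and fix $\varphi\in\Phi$ (which determines $\gamma$). For $\delta>1$, $U\in\mathcal G_*$ and an integer $j\ge\delta g(U)$, let $$\widetilde{\mathcal Q}(U,j,\delta)=\Big\{V\in\mathcal G_j:\ V\subset U,\ V\cap\Big(\bigcup_{k=g(U)}^{\gamma(j)}\ \bigcup_{p\in\mathcal T_k}B(y_p,\rho_p^\delta)\Big)\ne\emptyset\Big\}.$$ Then there is a constant $C_d$ depending only on $d$ such that for all such $\delta,U,j$, $$\#\widetilde{\mathcal Q}(U,j,\delta)\le C_d\,2^{d(j-g(U))}\Big[2^{-dj\varphi(2^{-j})}+\sum_{g(U)\le k\le j/\delta}2^{-dk(\delta-1-\psi(2^{-k}))}\Big].$$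
   Context: Work in $\mathbb R^d$ with the $L^\infty$ norm; $B(x,r)=\{y:\|y-x\|\le r\}$, $|A|$ is the diameter of $A$. A system is a sequence $\mathcal S=((x_n,r_n))_{n\ge1}$ with $x_n\in[0,1]^d$ and $(r_n)$ non-increasing positive tending to $0$. Irreducible subsystem: $((y_n,\rho_n))_{n\ge1}$ is the subsequence of $((x_n,r_n))$ consisting of the indices $n$ with $n=\min\{p\ge1:x_p=x_n\}$. For $j\ge0$, $\mathcal T_j=\{n:2^{-(j+1)}<\rho_n\le2^{-j}\}$. Condition $\mathcal C_1$: there is a non-decreasing sequence of positive integers $(N_j)_{j\ge0}$ with $\lim_{j}(\log_2N_j)/j=0$ such that for every $j\ge1$, $\mathcal T_j$ decomposes into at most $N_j$ pairwise disjoint subsets $\mathcal T_{j,1},\dots,\mathcal T_{j,N_j}$, each having pairwise disjoint balls $B(y_n,\rho_n)$, $n\in\mathcal T_{j,i}$. $\psi:\mathbb R_+\to\mathbb R_+$ is continuous with $\psi(0)=0$ and $N_j=2^{dj\psi(2^{-j})}$. $\Phi$ is the set of functions $\varphi:\mathbb R_+\to\mathbb R_+$ that are non-decreasing, continuous, with $\varphi(0)=0$, such that $r\mapsto r^{-\varphi(r)}$ is decreasing and tends to $+\infty$ as $r\to0^+$, and for all $\alpha,\beta>0$ the map $r\mapsto r^{\alpha-\beta\varphi(r)}$ is increasing near $0$. $\gamma(j)=\max\{k\in\mathbb N:N_k2^{dk}\le2^{-dj\varphi(2^{-j})}2^{dj}\}$. $\mathcal G_j$ is the set of dyadic subcubes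 of $[0,1]^d$ of side $2^{-j}$, $\mathcal G_*=\bigcup_{j\ge1}\mathcal G_j$, $g(I)=-\log_2|I|$. *)

theory Defs
  imports "HOL-Analysis.Analysis"
begin

text \<open>Points of R^d are elements of real^'d, with d = CARD('d).
  Closed ball for the sup (L-infinity) norm.\<close>
definition ball_inf :: "real^'d \<Rightarrow> real \<Rightarrow> (real^'d) set" where
  "ball_inf x r = {y. \<forall>i. \<bar>y $ i - x $ i\<bar> \<le> r}"

definition unit_cube :: "(real^'d) set" where
  "unit_cube = {x. \<forall>i. 0 \<le> x $ i \<and> x $ i \<le> 1}"

definition dyadic_cube :: "nat \<Rightarrow> ('d \<Rightarrow> nat) \<Rightarrow> (real^'d) set" where
  "dyadic_cube j k = {x. \<forall>i. real (k i) / 2^j \<le> x $ i \<and> x $ i \<le> (real (k i) + 1) / 2^j}"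

definition dyadic_cubes :: "nat \<Rightarrow> (real^'d) set set" where
  "dyadic_cubes j = {dyadic_cube j k | k. \<forall>i. k i < 2^j}"

text \<open>A system: centers in [0,1]^d, radii positive, non-increasing, tending to 0
  (indexed from 0 instead of 1).\<close>
definition is_system :: "(nat \<Rightarrow> real^'d) \<Rightarrow> (nat \<Rightarrow> real) \<Rightarrow> bool" where
  "is_system x r \<longleftrightarrow> (\<forall>n. x n \<in> unit_cube) \<and> (\<forall>n. 0 < r n) \<and> antimono r
     \<and> r \<longlonglongrightarrow> 0"

text \<open>Index n belongs to the irreducible subsystem iff it is the first index with centre x n.\<close>
definition first_occ :: "(nat \<Rightarrow> 'a) \<Rightarrow> nat \<Rightarrow> bool" where
  "first_occ x n \<longleftrightarrow> n = (LEAST p. x p = x n)"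

text \<open>T_j, expressed via the indices of the original system that form the irreducible
  subsystem (so y_p = x p and rho_p = r p for p in T_j).\<close>
definition T_set :: "(nat \<Rightarrow> 'a) \<Rightarrow> (nat \<Rightarrow> real) \<Rightarrow> nat \<Rightarrow> nat set" where
  "T_set x r j = {n. first_occ x n \<and> 2 powr (- real (j+1)) < r n \<and> r n \<le> 2 powr (- real j)}"

definition cond_C1 :: "(nat \<Rightarrow> real^'d) \<Rightarrow> (nat \<Rightarrow> real) \<Rightarrow> (nat \<Rightarrow> nat) \<Rightarrow> (real \<Rightarrow> real) \<Rightarrow> bool" where
  "cond_C1 x r N \<psi> \<longleftrightarrow>
     mono N \<and> (\<forall>j. 0 < N j) \<and> (\<lambda>j. log 2 (real (N j)) / real j) \<longlonglongrightarrow> 0 \<and>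
     (\<forall>j\<ge>1. \<exists>P :: nat \<Rightarrow> nat set.
         (\<Union>i<N j. P i) = T_set x r j \<and>
         (\<forall>i<N j. \<forall>i'<N j. i \<noteq> i' \<longrightarrow> P i \<inter> P i' = {}) \<and>
         (\<forall>i<N j. \<forall>n\<in>P i. \<forall>m\<in>P i. n \<noteq> m \<longrightarrow> ball_inf (x n) (r n) \<inter> ball_inf (x m) (r m) = {})) \<and>
     (\<forall>t\<ge>0. 0 \<le> \<psi> t) \<and> continuous_on {0..} \<psi> \<and> \<psi> 0 = 0 \<and>
     (\<forall>j. real (N j) = 2 powr (real CARD('d) * real j * \<psi> (2 powr (- real j))))"

definition in_Phi :: "(real \<Rightarrow> real) \<Rightarrow> bool" where
  "in_Phi \<phi> \<longleftrightarrow>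
     (\<forall>t\<ge>0. 0 \<le> \<phi> t) \<and> mono_on {0..} \<phi> \<and> continuous_on {0..} \<phi> \<and> \<phi> 0 = 0 \<and>
     (\<forall>s t. 0 < s \<longrightarrow> s < t \<longrightarrow> t powr (- \<phi> t) < s powr (- \<phi> s)) \<and>
     filterlim (\<lambda>t. t powr (- \<phi> t)) at_top (at_right 0) \<and>
     (\<forall>\<alpha>>0. \<forall>\<beta>>0. \<exists>\<epsilon>>0. \<forall>s t. 0 < s \<longrightarrow> s < t \<longrightarrow> t < \<epsilon> \<longrightarrow>
         s powr (\<alpha> - \<beta> * \<phi> s) < t powr (\<alpha> - \<beta> * \<phi> t))"

text \<open>gamma(j); the set is finite, and if it is empty we use 0 (since g(U) >= 1 this
  makes the corresponding union empty, as intended).\<close>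
definition gamma :: "nat \<Rightarrow> (nat \<Rightarrow> nat) \<Rightarrow> (real \<Rightarrow> real) \<Rightarrow> nat \<Rightarrow> nat" where
  "gamma d N \<phi> j =
     (let S = {k. real (N k) * 2 powr (real d * real k)
                   \<le> 2 powr (- real d * real j * \<phi> (2 powr (- real j))) * 2 powr (real d * real j)}
      in if S = {} then 0 else Max S)"

text \<open>The set Q~(U,j,delta), with U in G_{jU} (so g(U) = jU).\<close>
definition Qtilde :: "(nat \<Rightarrow> real^'d) \<Rightarrow> (nat \<Rightarrow> real) \<Rightarrow> (nat \<Rightarrow> nat) \<Rightarrow> (real \<Rightarrow> real)
    \<Rightarrow> (real^'d) set \<Rightarrow> nat \<Rightarrow> nat \<Rightarrow> real \<Rightarrow> (real^'d) set set" where
  "Qtilde x r N \<phi> U jU j \<delta> =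
     {V \<in> dyadic_cubes j. V \<subseteq> U \<and>
        V \<inter> (\<Union>k\<in>{jU..gamma CARD('d) N \<phi> j}. \<Union>p\<in>T_set x r k. ball_inf (x p) (r p powr \<delta>)) \<noteq> {}}"

end

theory Submission
  imports Defs
begin

(* Fix U = dyadic_cube jU a and write g = gamma(j).  A cube V of generation j
   counted in Q~(U,j,delta) meets some ball B(y_p, rho_p^delta) with p in T_k, jU <= k <= g;
   since rho_p^delta <= rho_p, the larger ball B(y_p, rho_p) then meets U.  Hence
     #Q~ <= sum_{k=jU}^{g} #{p in T_k : B(y_p,rho_p) meets U} * max_p #{V in G_j : V meets B(y_p,rho_p^delta)}.
   (1) By C_1, T_k splits into N_k families of pairwise disjoint balls of radius ~ 2^-k; rounding the
       centres to the grid of mesh 2^-(k+1) is injective on each family, so at most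
       N_k (8 * 2^(k-jU))^d balls of T_k meet U.
   (2) A ball of radius rho^delta <= 2^(-k delta) meets at most (4 max(1, 2^(j - k delta)))^d cubes of G_j.
   (3) The product of both bounds equals 32^d 2^(d(j-jU)) times a level weight that is
       2^(-dk(delta-1-psi(2^-k))) when k <= j/delta and N_k 2^(dk) 2^(-dj) otherwise.
   (4) The weights with k <= j/delta form part of the sum in the statement; the others sum to at most
       2 N_g 2^(dg) 2^(-dj) <= 2 * 2^(-dj phi(2^-j)) by monotonicity of N and the definition of gamma. *)

lemma card_int_interval:
  fixes a L :: real assumes "0 \<le> L"
  shows "finite {n::int. a \<le> n \<and> n \<le> a + L}" "real (card {n::int. a \<le> n \<and> n \<le> a + L}) \<le> L + 1"
proof -
  have eq: "{n::int. a \<le> n \<and> n \<le> a + L} = {\<lceil>a\<rceil>..\<lfloor>a+L\<rfloor>}"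
    by (auto simp: ceiling_le_iff le_floor_iff)
  show "finite {n::int. a \<le> n \<and> n \<le> a + L}" unfolding eq by simp
  have "real (card {\<lceil>a\<rceil>..\<lfloor>a+L\<rfloor>}) \<le> L + 1"
  proof (cases "\<lceil>a\<rceil> \<le> \<lfloor>a+L\<rfloor>")
    case True
    then have "real (card {\<lceil>a\<rceil>..\<lfloor>a+L\<rfloor>}) = real_of_int (\<lfloor>a+L\<rfloor> - \<lceil>a\<rceil> + 1)" by simp
    also have "\<dots> \<le> L + 1" using of_int_floor_le[of "a+L"] ceiling_correct[of a] by linarith
    finally show ?thesis .
  next
    case False then show ?thesis using assms by simp
  qed
  then show "real (card {n::int. a \<le> n \<and> n \<le> a + L}) \<le> L + 1" unfolding eq .
qed

lemma card_nat_interval: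
  fixes a L :: real assumes "0 \<le> L"
  shows "finite {n::nat. a \<le> n \<and> n \<le> a + L}" "real (card {n::nat. a \<le> n \<and> n \<le> a + L}) \<le> L + 1"
proof -
  let ?S = "{n::nat. a \<le> n \<and> n \<le> a + L}"
  have sub: "int ` ?S \<subseteq> {n::int. a \<le> n \<and> n \<le> a + L}" by auto
  have fin: "finite (int ` ?S)" using card_int_interval(1)[OF assms] finite_subset[OF sub] by blast
  then show "finite ?S" using finite_imageD inj_on_of_nat by blast
  have "card ?S = card (int ` ?S)" by (simp add: card_image)
  also have "\<dots> \<le> card {n::int. a \<le> n \<and> n \<le> a + L}" by (rule card_mono[OF card_int_interval(1)[OF assms] sub])
  finally show "real (card ?S) \<le> L + 1" using card_int_interval(2)[OF assms, of a] by linarith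
qed

lemma card_fun_box:
  fixes I :: "'d::finite \<Rightarrow> 'a set"
  assumes "\<And>i. finite (I i)" "\<And>i. real (card (I i)) \<le> c"
  shows "finite {f. \<forall>i. f i \<in> I i}" "real (card {f. \<forall>i. f i \<in> I i}) \<le> c ^ CARD('d)"
proof -
  have eq: "{f. \<forall>i. f i \<in> I i} = PiE UNIV I" by (auto simp: PiE_def Pi_def)
  show "finite {f. \<forall>i. f i \<in> I i}" unfolding eq using assms(1) by (simp add: finite_PiE)
  have "real (card (PiE UNIV I)) = (\<Prod>i\<in>UNIV. real (card (I i)))" by (simp add: card_PiE)
  also have "\<dots> \<le> (\<Prod>i\<in>(UNIV::'d set). c)" by (rule prod_mono) (use assms(2) in auto)
  also have "\<dots> = c ^ CARD('d)" by simp
  finally show "real (card {f. \<forall>i. f i \<in> I i}) \<le> c ^ CARD('d)" unfolding eq .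
qed

definition cubes_meeting :: "nat \<Rightarrow> real^'d \<Rightarrow> real \<Rightarrow> (real^'d) set set" where
  "cubes_meeting j c R = {V \<in> dyadic_cubes j. V \<inter> ball_inf c R \<noteq> {}}"

text \<open>A ball of radius R meets at most (2 R 2^j + 2)^d cubes of generation j: in each coordinate
  the admissible integer corners lie in an interval of length 2 R 2^j + 1.\<close>

lemma cubes_meeting_card:
  fixes c :: "real^'d" assumes R: "0 \<le> R"
  shows "finite (cubes_meeting j c R)" "real (card (cubes_meeting j c R)) \<le> (2*R*2^j + 2)^CARD('d)"
proof -
  define I where "I i = {n::nat. (c$i - R)*2^j - 1 \<le> n \<and> n \<le> (c$i - R)*2^j - 1 + (2*R*2^j+1)}" for i
  define K where "K = {kk. \<forall>i. kk i \<in> I i}"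
  have L: "0 \<le> 2*R*2^j+1" using R by simp
  have fI: "\<And>i. finite (I i)" unfolding I_def by (rule card_nat_interval(1)[OF L])
  have cI: "\<And>i. real (card (I i)) \<le> 2*R*2^j + 2"
    using card_nat_interval(2)[OF L, of "(c$i - R)*2^j - 1" for i] unfolding I_def by (simp add: add.assoc)
  have fK: "finite K" unfolding K_def by (rule card_fun_box(1)[OF fI cI])
  have cK: "real (card K) \<le> (2*R*2^j + 2)^CARD('d)" unfolding K_def by (rule card_fun_box(2)[OF fI cI])
  have sub: "cubes_meeting j c R \<subseteq> dyadic_cube j ` K"
  proof
    fix V assume "V \<in> cubes_meeting j c R"
    then obtain kk y where V: "V = dyadic_cube j kk" and yV: "y \<in> dyadic_cube j kk" and yB: "y \<in> ball_inf c R"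
      unfolding cubes_meeting_def dyadic_cubes_def by blast
    have "kk i \<in> I i" for i
    proof -
      have p: "0 < (2::real)^j" by simp
      have a: "real (kk i) / 2^j \<le> y$i" "y$i \<le> (real (kk i) + 1) / 2^j"
        using yV unfolding dyadic_cube_def by auto
      have b: "\<bar>y$i - c$i\<bar> \<le> R" using yB unfolding ball_inf_def by auto
      have "real (kk i) \<le> y$i * 2^j" "y$i * 2^j \<le> real (kk i) + 1"
        using a p by (simp_all add: field_simps)
      moreover have "(c$i - R) * 2^j \<le> y$i * 2^j" "y$i * 2^j \<le> (c$i + R) * 2^j"
        using b p by (simp_all add: mult_right_mono)
      ultimately show ?thesis unfolding I_def by (auto simp: algebra_simps)
    qed
    then show "V \<in> dyadic_cube j ` K" unfolding K_def V by blast
  qed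
  show "finite (cubes_meeting j c R)" using finite_subset[OF sub] fK by blast
  have "card (cubes_meeting j c R) \<le> card (dyadic_cube j ` K)"
    by (rule card_mono[OF _ sub]) (use fK in simp)
  also have "\<dots> \<le> card K" by (rule card_image_le[OF fK])
  finally show "real (card (cubes_meeting j c R)) \<le> (2*R*2^j + 2)^CARD('d)"
    using cK by linarith
qed

text \<open>Rounding a point up to the grid of mesh 1/s moves it by less than 1/s, so
  rounding the centres of pairwise disjoint balls of radii larger than 1/s is injective:
  two balls with the same rounded centre would share that grid point.\<close>

lemma ceiling_scaled_close:
  fixes t s :: real assumes "0 < s"
  shows "\<bar>real_of_int \<lceil>t * s\<rceil> / s - t\<bar> < 1 / s"
proof -
  have "t * s \<le> of_int \<lceil>t * s\<rceil>" "of_int \<lceil>t * s\<rceil> < t * s + 1" by linarith+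
  then have "t \<le> real_of_int \<lceil>t * s\<rceil> / s" "real_of_int \<lceil>t * s\<rceil> / s < t + 1/s"
    using assms by (simp_all add: field_simps)
  then show ?thesis by linarith
qed

lemma rounding_inj_on_disjoint_balls:
  fixes x :: "nat \<Rightarrow> real^'d"
  assumes disj: "\<forall>n\<in>S. \<forall>m\<in>S. n \<noteq> m \<longrightarrow> ball_inf (x n) (r n) \<inter> ball_inf (x m) (r m) = {}"
    and s: "0 < s" and rad: "\<forall>n\<in>S. 1/s < r n"
  shows "inj_on (\<lambda>n i. \<lceil>x n $ i * s\<rceil>) S"
proof
  fix n m assume n: "n \<in> S" and m: "m \<in> S" and e: "(\<lambda>i. \<lceil>x n $ i * s\<rceil>) = (\<lambda>i. \<lceil>x m $ i * s\<rceil>)"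
  define w :: "real^'d" where "w = (\<chi> i. real_of_int \<lceil>x n $ i * s\<rceil> / s)"
  have in_ball: "w \<in> ball_inf (x q) (r q)" if q: "q \<in> S" "(\<lambda>i. \<lceil>x q $ i * s\<rceil>) = (\<lambda>i. \<lceil>x n $ i * s\<rceil>)" for q
  proof -
    have "\<bar>w $ i - x q $ i\<bar> \<le> r q" for i
    proof -
      have "w $ i = real_of_int \<lceil>x q $ i * s\<rceil> / s" using fun_cong[OF q(2), of i] by (simp add: w_def)
      moreover have "1/s < r q" using rad q(1) by blast
      ultimately show ?thesis using ceiling_scaled_close[OF s, of "x q $ i"] by linarith
    qed
    then show ?thesis unfolding ball_inf_def by auto
  qed
  have "w \<in> ball_inf (x n) (r n) \<inter> ball_inf (x m) (r m)" using in_ball[OF n refl] in_ball[OF m e[symmetric]] by blast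
  then show "n = m" using disj n m by blast
qed

lemma rounded_centre_bounds:
  fixes c :: "real^'d" and a :: "'d \<Rightarrow> nat"
  assumes meets: "ball_inf c \<rho> \<inter> dyadic_cube jU a \<noteq> {}" and rk: "\<rho> \<le> 1/2^k"
  shows "(real (a i)/2^jU - 1/2^k) * 2^(k+1) \<le> of_int \<lceil>c $ i * 2^(k+1)\<rceil>"
    "of_int \<lceil>c $ i * 2^(k+1)\<rceil> \<le> (real (a i)/2^jU - 1/2^k) * 2^(k+1) + (2^(k+1)/2^jU + 5)"
proof -
  define s :: real where "s = 2^(k+1)"
  have s: "0 < s" unfolding s_def by simp
  obtain u where u: "u \<in> ball_inf c \<rho>" "u \<in> dyadic_cube jU a" using meets by auto
  have ub: "real (a i)/2^jU \<le> u$i" "u$i \<le> (real (a i)+1)/2^jU" using u(2) unfolding dyadic_cube_def by auto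
  have cb: "\<bar>u$i - c $ i\<bar> \<le> \<rho>" using u(1) unfolding ball_inf_def by auto
  have lx: "real (a i)/2^jU - 1/2^k \<le> c $ i" "c $ i \<le> (real (a i)+1)/2^jU + 1/2^k"
    using ub cb rk by linarith+
  have "(real (a i)/2^jU - 1/2^k) * s \<le> c $ i * s" using mult_right_mono[OF lx(1)] s by simp
  moreover have "c $ i * s \<le> ((real (a i)+1)/2^jU + 1/2^k) * s" using mult_right_mono[OF lx(2)] s by simp
  moreover have "((real (a i)+1)/2^jU + 1/2^k) * s = (real (a i)/2^jU - 1/2^k) * s + s/2^jU + 4"
    unfolding s_def by (simp add: field_simps)
  moreover have "c $ i * s \<le> of_int \<lceil>c $ i * s\<rceil>" "of_int \<lceil>c $ i * s\<rceil> < c $ i * s + 1" by linarith+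
  ultimately show "(real (a i)/2^jU - 1/2^k) * 2^(k+1) \<le> of_int \<lceil>c $ i * 2^(k+1)\<rceil>"
    "of_int \<lceil>c $ i * 2^(k+1)\<rceil> \<le> (real (a i)/2^jU - 1/2^k) * 2^(k+1) + (2^(k+1)/2^jU + 5)"
    unfolding s_def by linarith+
qed

text \<open>Hence a family of pairwise disjoint balls of radii in (2^-(k+1), 2^-k] has at most
  (8 * 2^(k-jU))^d members meeting a dyadic cube of generation jU <= k: their rounded centres
  (mesh 2^-(k+1)) lie in a box with about 2 * 2^(k-jU) + 6 integer values per coordinate.\<close>

lemma disjoint_balls_meeting_cube:
  fixes x :: "nat \<Rightarrow> real^'d" and a :: "'d \<Rightarrow> nat"
  assumes disj: "\<forall>n\<in>P. \<forall>m\<in>P. n \<noteq> m \<longrightarrow> ball_inf (x n) (r n) \<inter> ball_inf (x m) (r m) = {}"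
  and rad: "\<forall>n\<in>P. 1/2^(k+1) < r n \<and> r n \<le> 1/2^k"
  and jk: "jU \<le> k"
  shows "finite {n\<in>P. ball_inf (x n) (r n) \<inter> dyadic_cube jU a \<noteq> {}}"
    "real (card {n\<in>P. ball_inf (x n) (r n) \<inter> dyadic_cube jU a \<noteq> {}}) \<le> (8 * 2^(k-jU))^CARD('d)"
proof -
  define S where "S = {n\<in>P. ball_inf (x n) (r n) \<inter> dyadic_cube jU a \<noteq> {}}"
  define s :: real where "s = 2^(k+1)"
  have s: "0 < s" unfolding s_def by simp
  define z where "z n = (\<lambda>i. \<lceil>x n $ i * s\<rceil>)" for n
  define lo where "lo i = (real (a i)/2^jU - 1/2^k) * s" for i
  define Lc :: real where "Lc = s/2^jU + 5"
  define J where "J i = {q::int. lo i \<le> q \<and> q \<le> lo i + Lc}" for i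
  have Lc: "0 \<le> Lc" unfolding Lc_def using s by simp
  have sj: "s/2^jU = 2 * 2^(k-jU)" unfolding s_def using jk
    by (simp add: power_add[symmetric] field_simps)
  have fJ: "\<And>i. finite (J i)" unfolding J_def by (rule card_int_interval(1)[OF Lc])
  have cJ: "real (card (J i)) \<le> 8 * 2^(k-jU)" for i
  proof -
    have "real (card (J i)) \<le> Lc + 1" unfolding J_def by (rule card_int_interval(2)[OF Lc])
    also have "\<dots> = 2 * 2^(k-jU) + 6" unfolding Lc_def sj by simp
    also have "\<dots> \<le> 8 * 2^(k-jU)" using one_le_power[of "2::real" "k-jU"] by simp
    finally show ?thesis .
  qed
  have inj: "inj_on z S" unfolding z_def
  proof (rule rounding_inj_on_disjoint_balls[OF _ s])
    show "\<forall>n\<in>S. \<forall>m\<in>S. n \<noteq> m \<longrightarrow> ball_inf (x n) (r n) \<inter> ball_inf (x m) (r m) = {}"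
      using disj unfolding S_def by blast
    show "\<forall>n\<in>S. 1/s < r n" using rad unfolding S_def s_def by auto
  qed
  have sub: "z ` S \<subseteq> {f. \<forall>i. f i \<in> J i}"
  proof (safe)
    fix n i assume n: "n \<in> S"
    then have "ball_inf (x n) (r n) \<inter> dyadic_cube jU a \<noteq> {}" "r n \<le> 1/2^k"
      using rad unfolding S_def by auto
    from rounded_centre_bounds[OF this, of i]
    show "z n i \<in> J i" unfolding J_def z_def lo_def Lc_def s_def by simp
  qed
  have fB: "finite {f. \<forall>i. f i \<in> J i}" by (rule card_fun_box(1)[OF fJ cJ])
  have fS: "finite S" using finite_imageD[OF finite_subset[OF sub fB] inj] .
  then show "finite {n\<in>P. ball_inf (x n) (r n) \<inter> dyadic_cube jU a \<noteq> {}}" unfolding S_def .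
  have "card S = card (z ` S)" using card_image[OF inj] by simp
  also have "\<dots> \<le> card {f. \<forall>i. f i \<in> J i}" by (rule card_mono[OF fB sub])
  finally have "real (card S) \<le> real (card {f. \<forall>i. f i \<in> J i})" by simp
  also have "\<dots> \<le> (8 * 2^(k-jU))^CARD('d)" by (rule card_fun_box(2)[OF fJ cJ])
  finally show "real (card {n\<in>P. ball_inf (x n) (r n) \<inter> dyadic_cube jU a \<noteq> {}}) \<le> (8 * 2^(k-jU))^CARD('d)"
    unfolding S_def .
qed

lemma two_powr_neg_nat: "(2::real) powr (- real m) = 1 / 2^m"
  by (simp add: powr_minus powr_realpow divide_inverse)

definition level_balls_meeting ::
    "(nat \<Rightarrow> real^'d) \<Rightarrow> (nat \<Rightarrow> real) \<Rightarrow> nat \<Rightarrow> (real^'d) set \<Rightarrow> nat set" where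
  "level_balls_meeting x r k U = {p \<in> T_set x r k. ball_inf (x p) (r p) \<inter> U \<noteq> {}}"

text \<open>Step (1): under C_1, T_k is a union of N_k families of disjoint balls, so at most
  N_k (8 * 2^(k-jU))^d of its balls meet a cube of generation jU.\<close>

lemma level_balls_meeting_card:
  fixes x :: "nat \<Rightarrow> real^'d" and a :: "'d \<Rightarrow> nat"
  assumes C1: "cond_C1 x r N \<psi>" and k1: "1 \<le> k" and jk: "jU \<le> k"
  shows "finite (level_balls_meeting x r k (dyadic_cube jU a))"
    "real (card (level_balls_meeting x r k (dyadic_cube jU a))) \<le> real (N k) * (8 * 2^(k-jU))^CARD('d)"
proof -
  have "\<forall>j\<ge>1. \<exists>P :: nat \<Rightarrow> nat set. (\<Union>i<N j. P i) = T_set x r j \<and>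
         (\<forall>i<N j. \<forall>i'<N j. i \<noteq> i' \<longrightarrow> P i \<inter> P i' = {}) \<and>
         (\<forall>i<N j. \<forall>n\<in>P i. \<forall>m\<in>P i. n \<noteq> m \<longrightarrow> ball_inf (x n) (r n) \<inter> ball_inf (x m) (r m) = {})"
    using C1 unfolding cond_C1_def by (elim conjE) assumption
  then have "\<exists>P :: nat \<Rightarrow> nat set. (\<Union>i<N k. P i) = T_set x r k \<and>
         (\<forall>i<N k. \<forall>i'<N k. i \<noteq> i' \<longrightarrow> P i \<inter> P i' = {}) \<and>
         (\<forall>i<N k. \<forall>n\<in>P i. \<forall>m\<in>P i. n \<noteq> m \<longrightarrow> ball_inf (x n) (r n) \<inter> ball_inf (x m) (r m) = {})"
    using k1 by (elim allE impE)
  then obtain P :: "nat \<Rightarrow> nat set" where PU: "(\<Union>i<N k. P i) = T_set x r k" and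
    Pd: "\<forall>i<N k. \<forall>n\<in>P i. \<forall>m\<in>P i. n \<noteq> m \<longrightarrow> ball_inf (x n) (r n) \<inter> ball_inf (x m) (r m) = {}"
    by (elim exE conjE)
  define B where "B i = {n\<in>P i. ball_inf (x n) (r n) \<inter> dyadic_cube jU a \<noteq> {}}" for i
  have eq: "level_balls_meeting x r k (dyadic_cube jU a) = (\<Union>i<N k. B i)"
    unfolding level_balls_meeting_def B_def PU[symmetric] by blast
  have rad: "\<forall>n\<in>P i. 1/2^(k+1) < r n \<and> r n \<le> 1/2^k" if "i < N k" for i
  proof
    fix n assume "n \<in> P i"
    then have "n \<in> T_set x r k" using PU that by blast
    then show "1/2^(k+1) < r n \<and> r n \<le> 1/2^k" unfolding T_set_def
      using two_powr_neg_nat[of "k+1"] two_powr_neg_nat[of k] by simp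
  qed
  have fB: "finite (B i)" and cB: "real (card (B i)) \<le> (8 * 2^(k-jU))^CARD('d)" if "i < N k" for i
  proof -
    have "\<forall>n\<in>P i. \<forall>m\<in>P i. n \<noteq> m \<longrightarrow> ball_inf (x n) (r n) \<inter> ball_inf (x m) (r m) = {}"
      using Pd that by blast
    from disjoint_balls_meeting_cube[OF this rad[OF that] jk]
    show "finite (B i)" "real (card (B i)) \<le> (8 * 2^(k-jU))^CARD('d)" unfolding B_def by auto
  qed
  show "finite (level_balls_meeting x r k (dyadic_cube jU a))" unfolding eq using fB by blast
  have "card (\<Union>i<N k. B i) \<le> (\<Sum>i<N k. card (B i))" by (rule card_UN_le) simp
  then have "real (card (\<Union>i<N k. B i)) \<le> (\<Sum>i<N k. real (card (B i)))"
    by (metis of_nat_le_iff of_nat_sum)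
  also have "\<dots> \<le> (\<Sum>i<N k. (8 * 2^(k-jU))^CARD('d))" by (rule sum_mono) (use cB in auto)
  also have "\<dots> = real (N k) * (8 * 2^(k-jU))^CARD('d)" by simp
  finally show "real (card (level_balls_meeting x r k (dyadic_cube jU a))) \<le> real (N k) * (8 * 2^(k-jU))^CARD('d)"
    unfolding eq .
qed

text \<open>Step (2).  The side factor max(1, 2^(j - k delta)): a ball of radius rho^delta with
  rho <= 2^-k meets at most (4 times this factor)^d cubes of generation j.\<close>

definition side_factor :: "real \<Rightarrow> nat \<Rightarrow> nat \<Rightarrow> real" where
  "side_factor \<delta> j k = (if real k * \<delta> \<le> real j then 2 powr (real j - real k * \<delta>) else 1)"

lemma side_factor_nonneg: "0 \<le> side_factor \<delta> j k"
  unfolding side_factor_def by simp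

lemma small_ball_cubes_card:
  fixes c :: "real^'d"
  assumes r0: "0 < \<rho>" and rk: "\<rho> \<le> 2 powr (- real k)" and dl: "1 < \<delta>"
  shows "finite (cubes_meeting j c (\<rho> powr \<delta>))"
    "real (card (cubes_meeting j c (\<rho> powr \<delta>))) \<le> (4 * side_factor \<delta> j k)^CARD('d)"
proof -
  have R0: "0 \<le> \<rho> powr \<delta>" by simp
  show "finite (cubes_meeting j c (\<rho> powr \<delta>))" by (rule cubes_meeting_card(1)[OF R0])
  have "\<rho> powr \<delta> \<le> (2 powr (- real k)) powr \<delta>" by (rule powr_mono2) (use r0 rk dl in auto)
  also have "\<dots> = 2 powr (- real k * \<delta>)" by (simp add: powr_powr)
  finally have "\<rho> powr \<delta> * 2^j \<le> 2 powr (- real k * \<delta>) * 2 powr real j"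
    by (simp add: powr_realpow)
  also have "\<dots> = 2 powr (real j - real k * \<delta>)" by (simp add: powr_add[symmetric])
  finally have radius: "\<rho> powr \<delta> * 2^j \<le> 2 powr (real j - real k * \<delta>)" .
  have side: "2 * \<rho> powr \<delta> * 2^j + 2 \<le> 4 * side_factor \<delta> j k"
  proof (cases "real k * \<delta> \<le> real j")
    case True
    then have "1 \<le> 2 powr (real j - real k * \<delta>)" by (intro ge_one_powr_ge_zero) auto
    then show ?thesis using radius True unfolding side_factor_def by simp
  next
    case False
    then have "2 powr (real j - real k * \<delta>) < 1" by (intro powr_less_one) auto
    then show ?thesis using radius False unfolding side_factor_def by simp
  qed
  have "real (card (cubes_meeting j c (\<rho> powr \<delta>))) \<le> (2 * \<rho> powr \<delta> * 2^j + 2)^CARD('d)"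
    by (rule cubes_meeting_card(2)[OF R0])
  also have "\<dots> \<le> (4 * side_factor \<delta> j k)^CARD('d)" by (rule power_mono[OF side]) simp
  finally show "real (card (cubes_meeting j c (\<rho> powr \<delta>))) \<le> (4 * side_factor \<delta> j k)^CARD('d)" .
qed

text \<open>Covering step: a cube of Q~(U,j,delta) meets a shrunken ball B(y_p, rho_p^delta) with
  p in T_k, jU <= k <= gamma(j); as rho_p^delta <= rho_p <= 1, the full ball B(y_p, rho_p)
  then meets U.\<close>

lemma Qtilde_covered:
  fixes x :: "nat \<Rightarrow> real^'d"
  assumes sys: "is_system x r" and dl: "1 < \<delta>"
  shows "Qtilde x r N \<phi> U jU j \<delta> \<subseteq>
    (\<Union>k\<in>{jU..gamma CARD('d) N \<phi> j}. \<Union>p\<in>level_balls_meeting x r k U. cubes_meeting j (x p) (r p powr \<delta>))"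
proof
  fix V assume "V \<in> Qtilde x r N \<phi> U jU j \<delta>"
  then obtain k p y where V: "V \<in> dyadic_cubes j" "V \<subseteq> U" and k: "k \<in> {jU..gamma CARD('d) N \<phi> j}"
    and p: "p \<in> T_set x r k" and y: "y \<in> V" "y \<in> ball_inf (x p) (r p powr \<delta>)"
    unfolding Qtilde_def by blast
  have "0 < r p" using sys unfolding is_system_def by blast
  moreover have "r p \<le> 1"
    using p two_powr_neg_nat[of k] unfolding T_set_def by (auto intro: order_trans)
  ultimately have "r p powr \<delta> \<le> r p" using powr_mono'[of 1 \<delta> "r p"] dl by simp
  then have "y \<in> ball_inf (x p) (r p)" using y(2) unfolding ball_inf_def by (auto intro: order_trans)
  then have "p \<in> level_balls_meeting x r k U" using V y p unfolding level_balls_meeting_def by blast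
  moreover have "V \<in> cubes_meeting j (x p) (r p powr \<delta>)" using V y unfolding cubes_meeting_def by blast
  ultimately show "V \<in> (\<Union>k\<in>{jU..gamma CARD('d) N \<phi> j}. \<Union>p\<in>level_balls_meeting x r k U.
      cubes_meeting j (x p) (r p powr \<delta>))" using k by blast
qed

lemma Qtilde_card_le_level_sum:
  fixes x :: "nat \<Rightarrow> real^'d" and a :: "'d \<Rightarrow> nat"
  assumes sys: "is_system x r" and C1: "cond_C1 x r N \<psi>" and dl: "1 < \<delta>" and jU1: "1 \<le> jU"
  shows "real (card (Qtilde x r N \<phi> (dyadic_cube jU a) jU j \<delta>))
    \<le> (\<Sum>k\<in>{jU..gamma CARD('d) N \<phi> j}. real (N k) * (8*2^(k-jU))^CARD('d) * (4 * side_factor \<delta> j k)^CARD('d))"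
proof -
  define K where "K = {jU..gamma CARD('d) N \<phi> j}"
  define A where "A k = level_balls_meeting x r k (dyadic_cube jU a)" for k
  define Sp where "Sp p = cubes_meeting j (x p) (r p powr \<delta>)" for p
  have kge: "1 \<le> k" "jU \<le> k" if "k \<in> K" for k using jU1 that unfolding K_def by auto
  have fA: "finite (A k)" and cA: "real (card (A k)) \<le> real (N k) * (8*2^(k-jU))^CARD('d)" if "k \<in> K" for k
    using level_balls_meeting_card[OF C1 kge[OF that]] unfolding A_def by auto
  have fS: "finite (Sp p)" and cS: "real (card (Sp p)) \<le> (4 * side_factor \<delta> j k)^CARD('d)"
    if "p \<in> A k" for p k
  proof -
    have "0 < r p" using sys unfolding is_system_def by blast
    moreover have "r p \<le> 2 powr (- real k)" using that unfolding A_def level_balls_meeting_def T_set_def by auto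
    ultimately show "finite (Sp p)" "real (card (Sp p)) \<le> (4 * side_factor \<delta> j k)^CARD('d)"
      unfolding Sp_def using small_ball_cubes_card[OF _ _ dl] by auto
  qed
  have cover: "Qtilde x r N \<phi> (dyadic_cube jU a) jU j \<delta> \<subseteq> (\<Union>k\<in>K. \<Union>p\<in>A k. Sp p)"
    using Qtilde_covered[OF sys dl] unfolding K_def A_def Sp_def .
  have "finite (\<Union>k\<in>K. \<Union>p\<in>A k. Sp p)" using fA fS unfolding K_def by blast
  then have "card (Qtilde x r N \<phi> (dyadic_cube jU a) jU j \<delta>) \<le> card (\<Union>k\<in>K. \<Union>p\<in>A k. Sp p)"
    using cover by (rule card_mono)
  also have "\<dots> \<le> (\<Sum>k\<in>K. card (\<Union>p\<in>A k. Sp p))" by (rule card_UN_le) (simp add: K_def)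
  also have "\<dots> \<le> (\<Sum>k\<in>K. \<Sum>p\<in>A k. card (Sp p))" by (rule sum_mono, rule card_UN_le, rule fA)
  finally have "real (card (Qtilde x r N \<phi> (dyadic_cube jU a) jU j \<delta>)) \<le> real (\<Sum>k\<in>K. \<Sum>p\<in>A k. card (Sp p))"
    by (simp only: of_nat_le_iff)
  also have "\<dots> = (\<Sum>k\<in>K. \<Sum>p\<in>A k. real (card (Sp p)))" by simp
  also have "\<dots> \<le> (\<Sum>k\<in>K. real (card (A k)) * (4 * side_factor \<delta> j k)^CARD('d))"
  proof (rule sum_mono)
    fix k assume "k \<in> K"
    have "(\<Sum>p\<in>A k. real (card (Sp p))) \<le> (\<Sum>p\<in>A k. (4 * side_factor \<delta> j k)^CARD('d))"
      by (rule sum_mono) (use cS in blast)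
    then show "(\<Sum>p\<in>A k. real (card (Sp p))) \<le> real (card (A k)) * (4 * side_factor \<delta> j k)^CARD('d)" by simp
  qed
  also have "\<dots> \<le> (\<Sum>k\<in>K. real (N k) * (8*2^(k-jU))^CARD('d) * (4 * side_factor \<delta> j k)^CARD('d))"
    by (rule sum_mono, rule mult_right_mono[OF cA]) (auto simp: side_factor_nonneg)
  finally show ?thesis unfolding K_def .
qed

text \<open>Step (3).  The contribution of level k, measured in units of 32^d 2^(d(j-jU)).\<close>

definition level_weight :: "nat \<Rightarrow> (nat \<Rightarrow> nat) \<Rightarrow> (real \<Rightarrow> real) \<Rightarrow> real \<Rightarrow> nat \<Rightarrow> nat \<Rightarrow> real" where
  "level_weight d N \<psi> \<delta> j k =
     (if real k * \<delta> \<le> real j then 2 powr (- real d * real k * (\<delta> - 1 - \<psi> (2 powr (- real k))))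
      else real (N k) * 2 powr (real d * real k) * 2 powr (- real d * real j))"

lemma level_term_eq:
  fixes d :: nat
  assumes Nk: "real (N k) = 2 powr (real d * real k * \<psi> (2 powr (- real k)))" and jk: "jU \<le> k"
  shows "real (N k) * (8 * 2^(k-jU))^d * (4 * side_factor \<delta> j k)^d
    = 32^d * 2 powr (real d * (real j - real jU)) * level_weight d N \<psi> \<delta> j k"
proof -
  define \<psi>k where "\<psi>k = \<psi> (2 powr (- real k))"
  have p1: "(2::real)^(k-jU) = 2 powr (real k - real jU)"
    using jk by (simp add: powr_realpow[symmetric] of_nat_diff)
  have "real (N k) * (8 * 2^(k-jU))^d * (4 * side_factor \<delta> j k)^d
      = 32^d * (real (N k) * (2 powr (real k - real jU))^d * (side_factor \<delta> j k)^d)"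
    using power_mult_distrib[of "8::real" 4 d] by (simp add: p1 power_mult_distrib)
  also have "(2 powr (real k - real jU))^d = 2 powr (real d * (real k - real jU))" by (simp add: powr_power)
  finally have s: "real (N k) * (8 * 2^(k-jU))^d * (4 * side_factor \<delta> j k)^d
      = 32^d * (real (N k) * 2 powr (real d * (real k - real jU)) * (side_factor \<delta> j k)^d)" .
  show ?thesis
  proof (cases "real k * \<delta> \<le> real j")
    case True
    have "(side_factor \<delta> j k)^d = 2 powr (real d * (real j - real k * \<delta>))"
      using True unfolding side_factor_def by (simp add: powr_power)
    then have "real (N k) * 2 powr (real d * (real k - real jU)) * (side_factor \<delta> j k)^d
       = 2 powr (real d * real k * \<psi>k + real d * (real k - real jU) + real d * (real j - real k * \<delta>))"
      using Nk unfolding \<psi>k_def by (simp add: powr_add)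
    also have "\<dots> = 2 powr (real d * (real j - real jU) + - real d * real k * (\<delta> - 1 - \<psi>k))"
      by (rule arg_cong[where f="\<lambda>t. 2 powr t"]) (simp add: algebra_simps)
    also have "\<dots> = 2 powr (real d * (real j - real jU)) * 2 powr (- real d * real k * (\<delta> - 1 - \<psi>k))"
      by (rule powr_add)
    finally show ?thesis using s True unfolding level_weight_def \<psi>k_def by simp
  next
    case False
    have "(side_factor \<delta> j k)^d = 1" using False unfolding side_factor_def by simp
    moreover have "2 powr (real d * (real k - real jU))
        = 2 powr (real d * (real j - real jU)) * (2 powr (real d * real k) * 2 powr (- real d * real j))"
      by (simp add: powr_add[symmetric] algebra_simps)
    ultimately show ?thesis using s False unfolding level_weight_def by (simp add: algebra_simps)
  qed
qed

text \<open>Step (4), first ingredient: since N is non-decreasing, sum_{k<=n} N_k 2^(dk) is at most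
  twice its last term (a geometric sum of ratio 2^d >= 2).\<close>

lemma geometric_sum_le_twice_last: "(q::real) \<ge> 2 \<Longrightarrow> (\<Sum>k\<le>n. q^k) \<le> 2 * q^n"
proof (induction n)
  case 0 then show ?case by simp
next
  case (Suc n)
  have "(\<Sum>k\<le>Suc n. q^k) \<le> 2*q^n + q^Suc n" using Suc by simp
  also have "\<dots> \<le> 2*q^Suc n" using Suc.prems by (simp add: mult_right_mono)
  finally show ?case .
qed

lemma mono_weighted_sum_le:
  fixes N :: "nat \<Rightarrow> nat"
  assumes "mono N" and d: "1 \<le> d"
  shows "(\<Sum>k\<le>n. real (N k) * 2 powr (real d * real k)) \<le> 2 * real (N n) * 2 powr (real d * real n)"
proof -
  have pw: "(2::real) powr (real d * real k) = (2^d)^k" for k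
    by (metis of_nat_mult powr_realpow power_mult zero_less_numeral)
  have q: "(2::real)^d \<ge> 2" using d by (metis power_increasing power_one_right one_le_numeral)
  have "(\<Sum>k\<le>n. real (N k) * 2 powr (real d * real k)) \<le> (\<Sum>k\<le>n. real (N n) * (2^d)^k)"
    by (rule sum_mono) (use assms(1) in \<open>auto simp: pw mono_def intro!: mult_right_mono\<close>)
  also have "\<dots> = real (N n) * (\<Sum>k\<le>n. (2^d)^k)" by (simp add: sum_distrib_left)
  also have "\<dots> \<le> real (N n) * (2 * (2^d)^n)"
    by (rule mult_left_mono[OF geometric_sum_le_twice_last[OF q]]) simp
  finally show ?thesis by (simp add: pw)
qed

text \<open>Second ingredient: gamma(j), when non-zero, is an admissible k in its defining set, i.e.
  N_g 2^(dg) <= 2^(-dj phi(2^-j)) 2^(dj).  The set is finite because N_k 2^(dk) >= k.\<close>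

lemma gamma_admissible:
  fixes N :: "nat \<Rightarrow> nat" and d :: nat
  assumes d1: "1 \<le> d" and N1: "\<forall>k. 0 < N k" and g: "gamma d N \<phi> j \<noteq> 0"
  shows "real (N (gamma d N \<phi> j)) * 2 powr (real d * real (gamma d N \<phi> j))
           \<le> 2 powr (- real d * real j * \<phi> (2 powr (- real j))) * 2 powr (real d * real j)"
proof -
  define X where "X = 2 powr (- real d * real j * \<phi> (2 powr (- real j))) * 2 powr (real d * real j)"
  define S where "S = {k. real (N k) * 2 powr (real d * real k) \<le> X}"
  have gS: "gamma d N \<phi> j = (if S = {} then 0 else Max S)" unfolding gamma_def S_def X_def Let_def by simp
  have ne: "S \<noteq> {}" using g gS by auto
  have "S \<subseteq> {..nat \<lceil>X\<rceil>}"
  proof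
    fix k assume "k \<in> S"
    then have kX: "real (N k) * 2 powr (real d * real k) \<le> X" unfolding S_def by simp
    have "real k \<le> 2 powr real k" using less_exp[of k] by (simp add: powr_realpow)
    also have "\<dots> \<le> 2 powr (real d * real k)" using d1 mult_right_mono[of 1 "real d" "real k"] by (intro powr_mono) auto
    also have "\<dots> \<le> real (N k) * 2 powr (real d * real k)" using N1[rule_format, of k]
      by (simp add: mult_le_cancel_right1)
    finally have "real k \<le> X" using kX by linarith
    then show "k \<in> {..nat \<lceil>X\<rceil>}" by (simp add: le_nat_iff le_ceiling_iff)
  qed
  then have "finite S" using finite_subset by blast
  then have "Max S \<in> S" using ne by simp
  moreover have "gamma d N \<phi> j = Max S" using gS ne by simp
  ultimately have "gamma d N \<phi> j \<in> S" by simp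
  then show ?thesis unfolding S_def X_def by (rule CollectD)
qed

lemma large_levels_bound:
  fixes N :: "nat \<Rightarrow> nat" and d :: nat
  assumes d1: "1 \<le> d" and N1: "\<forall>k. 0 < N k" and monoN: "mono N" and jU1: "1 \<le> jU"
  shows "(\<Sum>k\<in>{jU..gamma d N \<phi> j} - {k. real k * \<delta> \<le> real j}.
            real (N k) * 2 powr (real d * real k) * 2 powr (- real d * real j))
         \<le> 2 * 2 powr (- real d * real j * \<phi> (2 powr (- real j)))"
proof (cases "gamma d N \<phi> j = 0")
  case True
  then show ?thesis using jU1 by simp
next
  case False
  define g where "g = gamma d N \<phi> j"
  define B where "B = 2 powr (- real d * real j * \<phi> (2 powr (- real j)))"
  have "(\<Sum>k\<in>{jU..g} - {k. real k * \<delta> \<le> real j}. real (N k) * 2 powr (real d * real k) * 2 powr (- real d * real j))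
      \<le> (\<Sum>k\<le>g. real (N k) * 2 powr (real d * real k) * 2 powr (- real d * real j))"
    by (rule sum_mono2) auto
  also have "\<dots> = 2 powr (- real d * real j) * (\<Sum>k\<le>g. real (N k) * 2 powr (real d * real k))"
    by (simp add: sum_distrib_left algebra_simps)
  also have "\<dots> \<le> 2 powr (- real d * real j) * (2 * real (N g) * 2 powr (real d * real g))"
    by (rule mult_left_mono[OF mono_weighted_sum_le[OF monoN d1]]) simp
  also have "\<dots> \<le> 2 powr (- real d * real j) * (2 * (B * 2 powr (real d * real j)))"
    using gamma_admissible[OF d1 N1 False] unfolding g_def B_def by (intro mult_left_mono) auto
  also have "\<dots> = 2 * B * (2 powr (- real d * real j) * 2 powr (real d * real j))" by simp
  also have "2 powr (- real d * real j) * 2 powr (real d * real j) = 1" by (simp add: powr_add[symmetric])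
  finally show ?thesis unfolding g_def B_def by simp
qed

lemma level_weight_sum_bound:
  fixes N :: "nat \<Rightarrow> nat" and d :: nat
  assumes d1: "1 \<le> d" and N1: "\<forall>k. 0 < N k" and monoN: "mono N" and dl: "1 < \<delta>" and jU1: "1 \<le> jU"
  shows "(\<Sum>k\<in>{jU..gamma d N \<phi> j}. level_weight d N \<psi> \<delta> j k)
   \<le> 2 * (2 powr (- real d * real j * \<phi> (2 powr (- real j)))
           + (\<Sum>k\<in>{k. jU \<le> k \<and> real k \<le> real j / \<delta>}.
                2 powr (- real d * real k * (\<delta> - 1 - \<psi> (2 powr (- real k))))))"
proof -
  define K where "K = {jU..gamma d N \<phi> j}"
  define small where "small = {k. real k * \<delta> \<le> real j}"
  define f where "f k = 2 powr (- real d * real k * (\<delta> - 1 - \<psi> (2 powr (- real k))))" for k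
  define h where "h k = real (N k) * 2 powr (real d * real k) * 2 powr (- real d * real j)" for k
  define B where "B = 2 powr (- real d * real j * \<phi> (2 powr (- real j)))"
  define T where "T = {k. jU \<le> k \<and> real k \<le> real j / \<delta>}"
  have "(\<Sum>k\<in>K. level_weight d N \<psi> \<delta> j k) = (\<Sum>k\<in>K \<inter> small. f k) + (\<Sum>k\<in>K \<inter> - small. h k)"
    unfolding level_weight_def f_def h_def small_def by (rule sum.If_cases) (simp add: K_def)
  also have "(\<Sum>k\<in>K \<inter> small. f k) \<le> (\<Sum>k\<in>T. f k)"
  proof (rule sum_mono2)
    have "T \<subseteq> {..j}"
    proof
      fix k assume "k \<in> T"
      then have "real k \<le> real j / \<delta>" unfolding T_def by simp
      also have "\<dots> \<le> real j" using dl mult_left_mono[of 1 \<delta> "real j"] by (simp add: divide_le_eq)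
      finally show "k \<in> {..j}" by simp
    qed
    then show "finite T" using finite_subset by blast
    show "K \<inter> small \<subseteq> T" unfolding K_def T_def small_def using dl by (auto simp: le_divide_eq)
    show "\<And>b. b \<in> T - K \<inter> small \<Longrightarrow> 0 \<le> f b" unfolding f_def by simp
  qed
  also have "(\<Sum>k\<in>K \<inter> - small. h k) \<le> 2 * B"
    using large_levels_bound[OF d1 N1 monoN jU1, where \<phi>=\<phi> and j=j and \<delta>=\<delta>]
    unfolding K_def small_def h_def B_def by (simp add: Diff_eq)
  finally have "(\<Sum>k\<in>K. level_weight d N \<psi> \<delta> j k) \<le> (\<Sum>k\<in>T. f k) + 2 * B" by simp
  moreover have "0 \<le> (\<Sum>k\<in>T. f k)" unfolding f_def by (simp add: sum_nonneg)
  ultimately have "(\<Sum>k\<in>K. level_weight d N \<psi> \<delta> j k) \<le> 2 * (B + (\<Sum>k\<in>T. f k))" by (simp add: distrib_left)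
  then show ?thesis unfolding K_def T_def f_def B_def .
qed

theorem mainTheorem3:
  "\<exists>C::real. \<forall>(x :: nat \<Rightarrow> real^'d) r N \<psi> \<phi> \<delta> U jU j.
     is_system x r \<and> cond_C1 x r N \<psi> \<and> in_Phi \<phi> \<and>
     1 < \<delta> \<and> 1 \<le> jU \<and> U \<in> dyadic_cubes jU \<and> \<delta> * real jU \<le> real j \<longrightarrow>
     real (card (Qtilde x r N \<phi> U jU j \<delta>))
       \<le> C * 2 powr (real CARD('d) * (real j - real jU)) *
          (2 powr (- real CARD('d) * real j * \<phi> (2 powr (- real j)))
           + (\<Sum>k\<in>{k. jU \<le> k \<and> real k \<le> real j / \<delta>}.
                2 powr (- real CARD('d) * real k * (\<delta> - 1 - \<psi> (2 powr (- real k))))))"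
proof (rule exI[of _ "2 * 32^CARD('d)"], intro allI impI, elim conjE)
  fix x :: "nat \<Rightarrow> real^'d" and r :: "nat \<Rightarrow> real" and N :: "nat \<Rightarrow> nat" and \<psi> \<phi> :: "real \<Rightarrow> real"
    and \<delta> :: real and U :: "(real^'d) set" and jU j :: nat
  assume sys: "is_system x r" and C1: "cond_C1 x r N \<psi>" and dl: "1 < \<delta>" and jU1: "1 \<le> jU"
    and U: "U \<in> dyadic_cubes jU"
  obtain a where Ua: "U = dyadic_cube jU a" using U unfolding dyadic_cubes_def by blast
  have N_eq: "\<forall>k. real (N k) = 2 powr (real CARD('d) * real k * \<psi> (2 powr (- real k)))"
    and N_pos: "\<forall>k. 0 < N k" and N_mono: "mono N" using C1 unfolding cond_C1_def by auto
  define P where "P = 2 powr (real CARD('d) * (real j - real jU))"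
  have "real (card (Qtilde x r N \<phi> U jU j \<delta>))
      \<le> (\<Sum>k\<in>{jU..gamma CARD('d) N \<phi> j}. real (N k) * (8*2^(k-jU))^CARD('d) * (4 * side_factor \<delta> j k)^CARD('d))"
    unfolding Ua by (rule Qtilde_card_le_level_sum[OF sys C1 dl jU1])
  also have "\<dots> = 32^CARD('d) * P * (\<Sum>k\<in>{jU..gamma CARD('d) N \<phi> j}. level_weight CARD('d) N \<psi> \<delta> j k)"
    unfolding sum_distrib_left P_def by (rule sum.cong[OF refl], rule level_term_eq) (use N_eq in auto)
  also have "\<dots> \<le> 32^CARD('d) * P * (2 * (2 powr (- real CARD('d) * real j * \<phi> (2 powr (- real j)))
           + (\<Sum>k\<in>{k. jU \<le> k \<and> real k \<le> real j / \<delta>}.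
                2 powr (- real CARD('d) * real k * (\<delta> - 1 - \<psi> (2 powr (- real k)))))))"
    by (rule mult_left_mono[OF level_weight_sum_bound[OF _ N_pos N_mono dl jU1]])
       (simp_all add: Suc_leI P_def)
  finally show "real (card (Qtilde x r N \<phi> U jU j \<delta>))
       \<le> 2 * 32^CARD('d) * 2 powr (real CARD('d) * (real j - real jU)) *
          (2 powr (- real CARD('d) * real j * \<phi> (2 powr (- real j)))
           + (\<Sum>k\<in>{k. jU \<le> k \<and> real k \<le> real j / \<delta>}.
                2 powr (- real CARD('d) * real k * (\<delta> - 1 - \<psi> (2 powr (- real k))))))"
    unfolding P_def by (simp only: mult_ac)
qed

end
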